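(* Fix $\beta\in(1,2)$, let $Y$ be the stationary random walk described in the context and $\mathcal C=\mathbb N^+$. Then for every $t\ge0$, $$\mathbf P[Y_0\in\mathcal C,\,Y_t\in\mathcal C]-\mathbf P[Y_0\in\mathcal C]^2\le\tfrac12\,\mathbf P\big[Y_s\in\mathcal C\ \forall s\in\{0,\dots,t\}\big],$$ and for every $\epsilon>0$ there is $t_0$ such that for all $t\ge t_0$, $$\mathbf P[Y_0\in\mathcal C,\,Y_t\in\mathcal C]-\mathbf P[Y_0\in\mathcal C]^2\ge\big(\tfrac12-\epsilon\big)\,\mathbf P\big[Y_s\in\mathcal C\ \forall s\in\{0,\dots,t\}\big].$$
   Context: The graph has vertex set $\mathbb Z^*=\mathbb Z\setminus\{0\}$ and edges: nearest-neighbour edges $\{n,n+1\}$ and $\{-(n+1),-n\}$ for $n\ge1$, the edge $\{-1,1\}$, and a self-loop at every vertex. Conductances: $c_{n,n+1}=c_{-(n+1),-n}=n^{-\beta}$ for $n\ge1$; $c_{-1,1}=c_{1,1}=c_{-1,-1}=1/2$; and for $|n|\ge2$ the self-loop conductance is $c_{n,n}=c_{n,n-1}+c_{n,n+1}$. The discrete-time walk moves from $x$ to $y$ with probability $c_{x,y}/\pi(x)$, where $\pi(x)=\sum_y c_{x,y}$ (self-loop counted once); it is run in stationarity (started from normalized $\pi$), with law $\mathbf P$. *)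

theory Defs
  imports "HOL-Analysis.Analysis"
begin

text \<open>The graph on vertex set Z* = Z - {0}, encoded as int with 0 excluded.
  Conductances c_{x,y} (symmetric; zero off the edge set and at 0).\<close>

definition cond :: "real \<Rightarrow> int \<Rightarrow> int \<Rightarrow> real" where
  "cond \<beta> x y =
     (if x = 0 \<or> y = 0 then 0
      else if (x = -1 \<and> y = 1) \<or> (x = 1 \<and> y = -1) then 1/2
      else if x = y then
        (if \<bar>x\<bar> = 1 then 1/2
         else real_of_int (\<bar>x\<bar> - 1) powr (-\<beta>) + real_of_int \<bar>x\<bar> powr (-\<beta>))
      else if \<bar>x - y\<bar> = 1 \<and> sgn x = sgn y then
        real_of_int (min \<bar>x\<bar> \<bar>y\<bar>) powr (-\<beta>)
      else 0)"

definition pi_w :: "real \<Rightarrow> int \<Rightarrow> real" where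
  "pi_w \<beta> x = (\<Sum>\<^sub>\<infinity>y. cond \<beta> x y)"

definition pi_norm :: "real \<Rightarrow> int \<Rightarrow> real" where
  "pi_norm \<beta> x = (if x = 0 then 0 else pi_w \<beta> x / (\<Sum>\<^sub>\<infinity>z\<in>-{0}. pi_w \<beta> z))"

definition trans_p :: "real \<Rightarrow> int \<Rightarrow> int \<Rightarrow> real" where
  "trans_p \<beta> x y = (if x = 0 then 0 else cond \<beta> x y / pi_w \<beta> x)"

fun trans_pow :: "real \<Rightarrow> nat \<Rightarrow> int \<Rightarrow> int \<Rightarrow> real" where
  "trans_pow \<beta> 0 x y = (if x = y then 1 else 0)"
| "trans_pow \<beta> (Suc n) x y = (\<Sum>\<^sub>\<infinity>z. trans_p \<beta> x z * trans_pow \<beta> n z y)"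

text \<open>stay_in beta C t x = probability, starting from x, that Y_s in C for all s in {1..t}.\<close>
fun stay_in :: "real \<Rightarrow> int set \<Rightarrow> nat \<Rightarrow> int \<Rightarrow> real" where
  "stay_in \<beta> C 0 x = 1"
| "stay_in \<beta> C (Suc n) x = (\<Sum>\<^sub>\<infinity>z\<in>C. trans_p \<beta> x z * stay_in \<beta> C n z)"

definition posC :: "int set" where "posC = {0<..}"

definition prob_start :: "real \<Rightarrow> int set \<Rightarrow> real" where
  "prob_start \<beta> C = (\<Sum>\<^sub>\<infinity>x\<in>C. pi_norm \<beta> x)"

definition prob_both :: "real \<Rightarrow> int set \<Rightarrow> nat \<Rightarrow> real" where
  "prob_both \<beta> C t = (\<Sum>\<^sub>\<infinity>x\<in>C. pi_norm \<beta> x * (\<Sum>\<^sub>\<infinity>y\<in>C. trans_pow \<beta> t x y))"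

definition prob_stay :: "real \<Rightarrow> int set \<Rightarrow> nat \<Rightarrow> real" where
  "prob_stay \<beta> C t = (\<Sum>\<^sub>\<infinity>x\<in>C. pi_norm \<beta> x * stay_in \<beta> C t x)"

end

theory Submission
  imports Defs
begin

(* Restricted to positive vertices n + 1 (n :: nat) the walk is a lazy birth-death chain on
   the half-line, with conductance a n on the edge {n, n + 1} and stationary weight
   weight n = 2 (a n + a (n + 1)); from vertex 1 it jumps to -1 with probability 1/4.
   Two sequences of functions on the half-line govern everything:
     survival t n  = P[the walk stays positive during {0..t} | Y_0 = n + 1], the iterates of
                     the kernel killed at the crossing;
     sign_mean t n = P[Y_t > 0 | Y_0 = n + 1] - P[Y_t < 0 | Y_0 = n + 1], the iterates of the
                     kernel acting on odd functions (a crossing flips the sign).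
   With W the total weight of the half-line, the covariance equals wsum (sign_mean t) / 4W
   and the stay probability is wsum (survival t) / 2W.  The first claim is then sign_mean <=
   survival pointwise.  For the second, detailed balance and Duhamel's formula express the
   defect wsum (survival t - sign_mean t) as a convolution of the decreasing sequence
   survival k 0, whose partial sums are bounded by 2W because each step loses mass
   survival k 0 / 2; hence the defect is O(1/t).  For conductances n^-beta with beta < 2
   the survival mass is at least of order t^(1-beta), so the defect is negligible. *)

lemma decreasing_term_bound:
  fixes u :: "nat \<Rightarrow> real"
  assumes dec: "decseq u" and sums: "\<And>t. (\<Sum>k<t. u k) \<le> M"
  shows "real (Suc j) * u j \<le> M"
proof -
  have "(\<Sum>k<Suc j. u j) \<le> (\<Sum>k<Suc j. u k)"
    using dec by (intro sum_mono) (auto simp: decseq_def)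
  then show ?thesis using sums[of "Suc j"] by simp
qed

text \<open>Self-convolution of such a sequence decays like 1/t: in each term one of the two
  indices is at least (t - 1)/2, where the sequence is at most 2M/(t + 1).\<close>
lemma convolution_of_decreasing:
  fixes u :: "nat \<Rightarrow> real"
  assumes nonneg: "\<And>k. 0 \<le> u k" and dec: "decseq u" and sums: "\<And>t. (\<Sum>k<t. u k) \<le> M"
  shows "(\<Sum>k<t. u k * u (t - Suc k)) \<le> 4 * M\<^sup>2 / real (Suc t)"
proof -
  define c where "c = 2 * M / real (Suc t)"
  have M: "0 \<le> M" using sums[of 0] by simp
  then have c: "0 \<le> c" by (simp add: c_def)
  have late: "u j \<le> c" if "t \<le> 2 * j + 1" for j
  proof -
    have "real (Suc t) * u j \<le> (2 * real (Suc j)) * u j"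
      using that nonneg[of j] by (intro mult_right_mono) auto
    also have "\<dots> \<le> 2 * M" using decreasing_term_bound[OF dec sums, of j] by (simp add: algebra_simps)
    finally show ?thesis by (simp add: c_def field_simps)
  qed
  have pair_bound: "u k * u (t - Suc k) \<le> c * (u k + u (t - Suc k))" if "k < t" for k
  proof (cases "t \<le> 2 * k + 1")
    case True
    then have "u k * u (t - Suc k) \<le> c * u (t - Suc k)"
      using late nonneg by (intro mult_right_mono) auto
    also have "\<dots> \<le> c * (u k + u (t - Suc k))" using nonneg[of k] c by (intro mult_left_mono) auto
    finally show ?thesis .
  next
    case False
    then have "u k * u (t - Suc k) \<le> u k * c"
      using that late[of "t - Suc k"] nonneg by (intro mult_left_mono) auto
    also have "\<dots> \<le> c * (u k + u (t - Suc k))"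
      using nonneg[of "t - Suc k"] c by (subst mult.commute) (intro mult_left_mono, auto)
    finally show ?thesis .
  qed
  have reflect: "(\<Sum>k<t. u (t - Suc k)) = (\<Sum>k<t. u k)"
    using sum.atLeastLessThan_rev[of u 0 t] by (simp add: lessThan_atLeast0)
  have "(\<Sum>k<t. u k * u (t - Suc k)) \<le> (\<Sum>k<t. c * (u k + u (t - Suc k)))"
    using pair_bound by (intro sum_mono) auto
  also have "\<dots> = c * (2 * (\<Sum>k<t. u k))"
    by (simp add: sum_distrib_left[symmetric] sum.distrib reflect)
  also have "\<dots> \<le> c * (2 * M)"
    using sums[of t] c by (intro mult_left_mono) auto
  also have "\<dots> = 4 * M\<^sup>2 / real (Suc t)" by (simp add: c_def power2_eq_square)
  finally show ?thesis .
qed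

text \<open>A lazy birth-death chain on the half-line nat, given by summable conductances a with
  a 0 = 0 (no edge to the left of 0) and a 1 = 1 (so that the origin, like the vertex 1 of Z*,
  carries weight 2).  The chain is killed at rate 1/4 at the origin.\<close>
locale half_line_chain =
  fixes a :: "nat \<Rightarrow> real"
  assumes a_zero [simp]: "a 0 = 0" and a_one [simp]: "a (Suc 0) = 1"
    and a_pos: "\<And>n. 0 < a (Suc n)" and a_summable: "summable a"
begin

text \<open>Stationary weight of site n and the one-step probabilities; half of the weight of every
  site is a holding loop, except at the origin where half of that loop is the crossing.\<close>
definition weight :: "nat \<Rightarrow> real" where "weight n = 2 * (a n + a (Suc n))"
definition p_left :: "nat \<Rightarrow> real" where "p_left n = a n / weight n"
definition p_right :: "nat \<Rightarrow> real" where "p_right n = a (Suc n) / weight n"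
definition p_hold :: "nat \<Rightarrow> real" where "p_hold n = (if n = 0 then 1/4 else 1/2)"

definition killed :: "(nat \<Rightarrow> real) \<Rightarrow> nat \<Rightarrow> real" where
  "killed f n = p_left n * f (n - 1) + p_hold n * f n + p_right n * f (Suc n)"

text \<open>The transition operator on odd functions: a crossing contributes with opposite sign.\<close>
definition odd_step :: "(nat \<Rightarrow> real) \<Rightarrow> nat \<Rightarrow> real" where
  "odd_step f n = killed f n - (if n = 0 then f 0 / 4 else 0)"

definition survival :: "nat \<Rightarrow> nat \<Rightarrow> real" where "survival t = (killed ^^ t) (\<lambda>_. 1)"
definition sign_mean :: "nat \<Rightarrow> nat \<Rightarrow> real" where "sign_mean t = (odd_step ^^ t) (\<lambda>_. 1)"

definition wsum :: "(nat \<Rightarrow> real) \<Rightarrow> real" where "wsum f = (\<Sum>n. weight n * f n)"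
definition total :: real where "total = wsum (\<lambda>_. 1)"

lemma a_nonneg: "0 \<le> a n"
  using a_pos[of "n - 1"] by (cases n) auto

lemma weight_pos: "0 < weight n"
  using a_nonneg[of n] a_pos[of n] by (simp add: weight_def)

lemma weight_zero [simp]: "weight 0 = 2"
  by (simp add: weight_def)

lemma p_left_nonneg: "0 \<le> p_left n" and p_right_nonneg: "0 \<le> p_right n"
  using a_nonneg weight_pos by (simp_all add: p_left_def p_right_def less_imp_le)

lemma p_left_right: "p_left n + p_right n = 1/2"
proof -
  have "0 < a n + a (Suc n)" using weight_pos[of n] by (simp add: weight_def)
  then show ?thesis by (simp add: p_left_def p_right_def weight_def add_divide_distrib[symmetric])
qed

text \<open>The weighted operator is expressed by the conductances: the chain is reversible.\<close>
lemma weight_killed: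
  "weight n * killed f n = a n * f (n - 1) + weight n * p_hold n * f n + a (Suc n) * f (Suc n)"
  using weight_pos[of n] by (simp add: killed_def p_left_def p_right_def field_simps)

lemma summable_weight: "summable weight"
  unfolding weight_def using a_summable summable_Suc_iff[of a]
  by (intro summable_mult summable_add) auto

lemma summable_weighted: "Bseq f \<Longrightarrow> summable (\<lambda>n. weight n * f n)"
proof -
  assume "Bseq f"
  then obtain K where K: "\<And>n. \<bar>f n\<bar> \<le> K" by (auto simp: Bseq_def)
  show ?thesis
  proof (rule summable_comparison_test)
    show "\<exists>N. \<forall>n\<ge>N. norm (weight n * f n) \<le> K * weight n"
      using K weight_pos by (auto simp: abs_mult abs_of_pos intro: mult_left_mono)
    show "summable (\<lambda>n. K * weight n)" by (rule summable_mult[OF summable_weight])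
  qed
qed

lemma Bseq_killed: "Bseq f \<Longrightarrow> Bseq (killed f)"
proof -
  assume "Bseq f"
  then obtain K where K: "\<And>n. \<bar>f n\<bar> \<le> K" by (auto simp: Bseq_def)
  have "\<bar>killed f n\<bar> \<le> p_left n * K + p_hold n * K + p_right n * K" for n
  proof -
    have "\<bar>killed f n\<bar> \<le> \<bar>p_left n * f (n - 1)\<bar> + \<bar>p_hold n * f n\<bar> + \<bar>p_right n * f (Suc n)\<bar>"
      unfolding killed_def by (meson abs_triangle_ineq add_mono order_refl order_trans)
    also have "\<dots> = p_left n * \<bar>f (n - 1)\<bar> + p_hold n * \<bar>f n\<bar> + p_right n * \<bar>f (Suc n)\<bar>"
      using p_left_nonneg[of n] p_right_nonneg[of n] by (simp add: abs_mult p_hold_def)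
    also have "\<dots> \<le> p_left n * K + p_hold n * K + p_right n * K"
      using K p_left_nonneg[of n] p_right_nonneg[of n]
      by (intro add_mono mult_left_mono) (auto simp: p_hold_def)
    finally show ?thesis .
  qed
  moreover have "p_left n * K + p_hold n * K + p_right n * K \<le> K" for n
  proof -
    have "p_left n * K + p_hold n * K + p_right n * K = (p_hold n + (p_left n + p_right n)) * K"
      by (simp add: algebra_simps)
    also have "\<dots> = (p_hold n + 1/2) * K" by (simp only: p_left_right)
    also have "\<dots> \<le> K"
      using K[of 0] by (intro mult_left_le_one_le) (auto simp: p_hold_def)
    finally show ?thesis .
  qed
  ultimately show ?thesis by (intro BseqI'[where K = K]) (metis order_trans real_norm_def)
qed

text \<open>The difference of the two sides
  telescopes into the boundary flux a n (f n h (n - 1) - f (n - 1) h n), which vanishes at 0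
  and at infinity.\<close>
lemma killed_reversible:
  assumes f: "Bseq f" and h: "Bseq h"
  shows "wsum (\<lambda>n. killed f n * h n) = wsum (\<lambda>n. f n * killed h n)"
proof -
  define D where "D n = a n * (f n * h (n - 1) - f (n - 1) * h n)" for n
  obtain K J where K: "\<And>n. \<bar>f n\<bar> \<le> K" and J: "\<And>n. \<bar>h n\<bar> \<le> J"
    using f h by (auto simp: Bseq_def)
  have "(\<lambda>n. D (Suc n) - D n) sums (0 - D 0)"
  proof (rule telescope_sums, rule tendsto_0_le)
    show "a \<longlonglongrightarrow> 0" by (rule summable_LIMSEQ_zero[OF a_summable])
    have prod: "\<bar>f i * h j\<bar> \<le> K * J" for i j
      unfolding abs_mult using K[of i] J[of j] order.trans[OF abs_ge_zero K]
      by (intro mult_mono) auto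
    have "\<bar>f n * h (n - 1) - f (n - 1) * h n\<bar> \<le> 2 * (K * J)" for n
      using abs_triangle_ineq4[of "f n * h (n - 1)" "f (n - 1) * h n"] prod[of n "n - 1"] prod[of "n - 1" n]
      by linarith
    then show "\<forall>\<^sub>F n in sequentially. norm (D n) \<le> norm (a n) * (2 * (K * J))"
      using a_nonneg by (intro always_eventually allI) (simp add: D_def abs_mult mult_left_mono)
  qed
  moreover have "weight n * (killed f n * h n) - weight n * (f n * killed h n) = D (Suc n) - D n" for n
  proof -
    have "weight n * (killed f n * h n) - weight n * (f n * killed h n)
        = (weight n * killed f n) * h n - f n * (weight n * killed h n)"
      by (simp only: mult_ac)
    also have "\<dots> = D (Suc n) - D n"
      unfolding weight_killed D_def by (simp add: algebra_simps)
    finally show ?thesis .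
  qed
  ultimately have "(\<lambda>n. weight n * (killed f n * h n) - weight n * (f n * killed h n)) sums 0"
    by (simp add: D_def)
  moreover have "summable (\<lambda>n. weight n * (killed f n * h n))" "summable (\<lambda>n. weight n * (f n * killed h n))"
    using f h by (auto intro!: summable_weighted Bseq_mult Bseq_killed)
  ultimately show ?thesis
    unfolding wsum_def by (metis (no_types) eq_iff_diff_eq_0 sums_unique suminf_diff)
qed

lemma killed_diff: "killed (\<lambda>n. f n - h n) n = killed f n - killed h n"
  by (simp add: killed_def algebra_simps)

lemma killed_mono: "(\<And>n. f n \<le> h n) \<Longrightarrow> killed f n \<le> killed h n"
  unfolding killed_def using p_left_nonneg[of n] p_right_nonneg[of n]
  by (intro add_mono mult_left_mono) (auto simp: p_hold_def)

lemma killed_nonneg: "(\<And>n. 0 \<le> f n) \<Longrightarrow> 0 \<le> killed f n"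
  using killed_mono[of "\<lambda>_. 0" f n] by (simp add: killed_def)

lemma killed_one: "killed (\<lambda>_. 1) n = (if n = 0 then 3/4 else 1)"
  using p_left_right[of n] by (cases "n = 0") (simp_all add: killed_def p_hold_def)

text \<open>If f describes an odd function on Z*, then (1 \<plusminus> f)/2 on the two half-lines evolves by the
  killed chain plus the crossing; this is how odd_step arises from the walk.\<close>
lemma odd_step_lift:
  "killed (\<lambda>k. (1 + f k) / 2) n + (if n = 0 then (1 - f 0) / 8 else 0) = (1 + odd_step f n) / 2"
  "killed (\<lambda>k. (1 - f k) / 2) n + (if n = 0 then (1 + f 0) / 8 else 0) = (1 - odd_step f n) / 2"
  using p_left_right[of n]
  by (cases "n = 0"; simp add: killed_def odd_step_def p_hold_def algebra_simps add_divide_distrib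
      diff_divide_distrib)+

lemma survival_0 [simp]: "survival 0 = (\<lambda>_. 1)"
  by (simp add: survival_def)

lemma survival_Suc: "survival (Suc t) = killed (survival t)"
  by (simp add: survival_def)

lemma sign_mean_0 [simp]: "sign_mean 0 = (\<lambda>_. 1)"
  by (simp add: sign_mean_def)

lemma sign_mean_Suc: "sign_mean (Suc t) = odd_step (sign_mean t)"
  by (simp add: sign_mean_def)

lemma survival_bounds: "0 \<le> survival t n \<and> survival t n \<le> 1"
proof (induction t arbitrary: n)
  case (Suc t)
  have "killed (survival t) n \<le> killed (\<lambda>_. 1) n" using Suc by (intro killed_mono) auto
  then show ?case using Suc killed_nonneg killed_one[of n] by (auto simp: survival_Suc split: if_splits)
qed simp

lemma sign_mean_bounds: "0 \<le> sign_mean t n \<and> sign_mean t n \<le> survival t n"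
proof (induction t arbitrary: n)
  case (Suc t)
  have "0 \<le> odd_step (sign_mean t) n"
    unfolding odd_step_def killed_def using Suc p_left_nonneg[of n] p_right_nonneg[of n]
    by (auto simp: p_hold_def)
  moreover have "odd_step (sign_mean t) n \<le> killed (sign_mean t) n"
    using Suc by (simp add: odd_step_def)
  moreover have "killed (sign_mean t) n \<le> killed (survival t) n"
    using Suc by (intro killed_mono) auto
  ultimately show ?case by (simp add: sign_mean_Suc survival_Suc)
qed simp

lemma survival_decreasing: "survival (Suc t) n \<le> survival t n"
proof (induction t arbitrary: n)
  case 0
  then show ?case using survival_bounds[of 1 n] by simp
next
  case (Suc t)
  then show ?case unfolding survival_Suc[of "Suc t"] survival_Suc[of t] by (intro killed_mono)
qed

lemma survival_far: "t \<le> n \<Longrightarrow> survival t n = 1"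
proof (induction t arbitrary: n)
  case (Suc t)
  then have "killed (survival t) n = killed (\<lambda>_. 1) n" by (simp add: killed_def)
  then show ?case using Suc.prems by (simp add: survival_Suc killed_one)
qed simp

lemma Bseq_survival: "Bseq (survival t)"
  using survival_bounds by (intro BseqI'[where K = 1]) auto

lemma Bseq_sign_mean: "Bseq (sign_mean t)"
proof (rule BseqI'[where K = 1])
  show "norm (sign_mean t n) \<le> 1" for n
    using sign_mean_bounds[of t n] survival_bounds[of t n] by simp
qed

lemma wsum_diff: "Bseq f \<Longrightarrow> Bseq h \<Longrightarrow> wsum (\<lambda>n. f n - h n) = wsum f - wsum h"
  unfolding wsum_def using summable_weighted[of f] summable_weighted[of h]
  by (simp add: right_diff_distrib suminf_diff)

lemma wsum_add: "Bseq f \<Longrightarrow> Bseq h \<Longrightarrow> wsum (\<lambda>n. f n + h n) = wsum f + wsum h"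
  unfolding wsum_def using summable_weighted[of f] summable_weighted[of h]
  by (simp add: distrib_left suminf_add)

lemma wsum_scale: "Bseq f \<Longrightarrow> wsum (\<lambda>n. c * f n) = c * wsum f"
  unfolding wsum_def using summable_weighted[of f]
  by (simp add: mult.left_commute suminf_mult)

lemma wsum_nonneg: "Bseq f \<Longrightarrow> (\<And>n. 0 \<le> f n) \<Longrightarrow> 0 \<le> wsum f"
  unfolding wsum_def using weight_pos
  by (intro suminf_nonneg summable_weighted) (auto intro: mult_nonneg_nonneg less_imp_le)

lemma wsum_origin: "wsum (\<lambda>n. if n = 0 then c else 0) = 2 * c"
proof -
  have "(\<lambda>n. weight n * (if n = 0 then c else 0)) = (\<lambda>n. if n = 0 then 2 * c else 0)"
    by auto
  then show ?thesis unfolding wsum_def using sums_single[of 0 "\<lambda>_. 2 * c"] by (simp add: sums_iff)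
qed

lemma Bseq_origin: "Bseq (\<lambda>n. if n = 0 then c else 0 :: real)"
  by (intro BseqI'[where K = "\<bar>c\<bar>"]) auto

lemma survival_telescope: "wsum (survival (Suc t)) = wsum (survival t) - survival t 0 / 2"
proof -
  have "wsum (survival (Suc t)) = wsum (\<lambda>n. killed (survival t) n * 1)"
    by (simp add: survival_Suc)
  also have "\<dots> = wsum (\<lambda>n. survival t n * killed (\<lambda>_. 1) n)"
    by (rule killed_reversible[OF Bseq_survival]) simp
  also have "\<dots> = wsum (\<lambda>n. survival t n - (if n = 0 then survival t 0 / 4 else 0))"
    by (rule arg_cong[where f = wsum]) (auto simp: killed_one)
  also have "\<dots> = wsum (survival t) - survival t 0 / 2"
    by (simp add: wsum_diff[OF Bseq_survival Bseq_origin] wsum_origin)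
  finally show ?thesis .
qed

lemma survival_origin_sum: "(\<Sum>k<t. survival k 0) \<le> 2 * total"
proof -
  have "wsum (survival t) + (\<Sum>k<t. survival k 0) / 2 = total"
    by (induction t) (simp_all add: total_def survival_telescope field_simps)
  moreover have "0 \<le> wsum (survival t)"
    using survival_bounds by (intro wsum_nonneg Bseq_survival) auto
  ultimately show ?thesis by simp
qed

text \<open>The defect survival - sign_mean; on Z*, half the stay probability minus the covariance
  is wsum (defect t) / (4 total).\<close>
definition defect :: "nat \<Rightarrow> nat \<Rightarrow> real" where "defect t n = survival t n - sign_mean t n"

lemma defect_eq: "defect t = (\<lambda>n. survival t n - sign_mean t n)"
  by (simp add: fun_eq_iff defect_def)

lemma defect_bounds: "0 \<le> defect t n \<and> defect t n \<le> 1"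
  using sign_mean_bounds[of t n] survival_bounds[of t n] by (simp add: defect_def)

lemma Bseq_defect: "Bseq (defect t)"
  using defect_bounds by (intro BseqI'[where K = 1]) auto

lemma defect_Suc: "defect (Suc t) n = killed (defect t) n + (if n = 0 then sign_mean t 0 / 4 else 0)"
  unfolding defect_def survival_Suc sign_mean_Suc odd_step_def
  by (simp add: killed_diff[symmetric])

text \<open>Duhamel's formula, tested against the survival functions.\<close>
lemma defect_duhamel:
  "wsum (\<lambda>n. defect t n * survival m n)
     = (\<Sum>k<t. sign_mean k 0 * survival (t - Suc k + m) 0) / 2"
proof (induction t arbitrary: m)
  case 0
  then show ?case by (simp add: defect_def wsum_def)
next
  case (Suc t)
  have bounded: "Bseq (\<lambda>n. killed (defect t) n * survival m n)"
    by (intro Bseq_mult Bseq_killed Bseq_defect Bseq_survival)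
  have "wsum (\<lambda>n. defect (Suc t) n * survival m n)
      = wsum (\<lambda>n. killed (defect t) n * survival m n
                 + (if n = 0 then sign_mean t 0 / 4 * survival m 0 else 0))"
    by (rule arg_cong[where f = wsum]) (auto simp: defect_Suc algebra_simps)
  also have "\<dots> = wsum (\<lambda>n. defect t n * survival (Suc m) n) + sign_mean t 0 * survival m 0 / 2"
    by (simp add: wsum_add[OF bounded Bseq_origin] wsum_origin survival_Suc
        killed_reversible[OF Bseq_defect Bseq_survival])
  also have "\<dots> = (\<Sum>k<Suc t. sign_mean k 0 * survival (Suc t - Suc k + m) 0) / 2"
    by (simp add: Suc.IH add_divide_distrib Suc_diff_Suc)
  finally show ?case .
qed

text \<open>The covariance is at most half the stay probability.\<close>
lemma sign_mean_le_survival: "wsum (sign_mean t) \<le> wsum (survival t)"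
proof -
  have "0 \<le> wsum (defect t)" using defect_bounds by (intro wsum_nonneg Bseq_defect) auto
  then show ?thesis by (simp add: defect_eq wsum_diff Bseq_survival Bseq_sign_mean)
qed

lemma defect_decay: "wsum (survival t) - wsum (sign_mean t) \<le> 8 * total\<^sup>2 / real (Suc t)"
proof -
  have "wsum (survival t) - wsum (sign_mean t) = wsum (defect t)"
    by (simp add: defect_eq wsum_diff Bseq_survival Bseq_sign_mean)
  also have "\<dots> = (\<Sum>k<t. sign_mean k 0 * survival (t - Suc k) 0) / 2"
    using defect_duhamel[of t 0] by simp
  also have "\<dots> \<le> (\<Sum>k<t. survival k 0 * survival (t - Suc k) 0) / 2"
    using sign_mean_bounds survival_bounds
    by (intro divide_right_mono sum_mono mult_right_mono) auto
  also have "\<dots> \<le> (4 * (2 * total)\<^sup>2 / real (Suc t)) / 2"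
  proof (intro divide_right_mono convolution_of_decreasing)
    show "decseq (\<lambda>k. survival k 0)" by (rule decseq_SucI) (rule survival_decreasing)
  qed (use survival_bounds survival_origin_sum in auto)
  also have "\<dots> = 8 * total\<^sup>2 / real (Suc t)" by (simp add: power2_eq_square field_simps)
  finally show ?thesis .
qed

lemma total_pos: "0 < total"
  unfolding total_def wsum_def using summable_weight weight_pos by (simp add: suminf_pos)

lemma survival_tail_lower: "(\<Sum>n\<in>{t..<m}. weight n) \<le> wsum (survival t)"
proof -
  have "(\<Sum>n\<in>{t..<m}. weight n) = (\<Sum>n\<in>{t..<m}. weight n * survival t n)"
    by (simp add: survival_far)
  also have "\<dots> \<le> wsum (survival t)"
    unfolding wsum_def using survival_bounds weight_pos
    by (intro sum_le_suminf summable_weighted Bseq_survival)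
      (auto intro!: mult_nonneg_nonneg less_imp_le[OF weight_pos] simp: survival_bounds)
  finally show ?thesis .
qed

lemma defect_negligible:
  assumes grows: "filterlim (\<lambda>t. real t * wsum (survival t)) at_top sequentially" and "0 < e"
  shows "eventually (\<lambda>t. wsum (survival t) - wsum (sign_mean t) \<le> e * wsum (survival t)) sequentially"
proof -
  have "eventually (\<lambda>t. 8 * total\<^sup>2 / e \<le> real t * wsum (survival t) \<and> 1 \<le> t) sequentially"
    using grows by (intro eventually_conj) (auto simp: filterlim_at_top)
  then show ?thesis
  proof (rule eventually_mono, clarify)
    fix t :: nat assume big: "8 * total\<^sup>2 / e \<le> real t * wsum (survival t)" and "1 \<le> t"
    have "wsum (survival t) - wsum (sign_mean t) \<le> 8 * total\<^sup>2 / real (Suc t)"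
      by (rule defect_decay)
    also have "\<dots> \<le> 8 * total\<^sup>2 / real t"
      using \<open>1 \<le> t\<close> by (intro divide_left_mono) auto
    also have "\<dots> \<le> e * wsum (survival t)"
      using big \<open>0 < e\<close> \<open>1 \<le> t\<close> by (simp add: field_simps)
    finally show "wsum (survival t) - wsum (sign_mean t) \<le> e * wsum (survival t)" .
  qed
qed

end

lemma powr_sequentially_at_top:
  assumes "0 < p" shows "filterlim (\<lambda>t::nat. real t powr p) at_top sequentially"
proof -
  have "filterlim (\<lambda>x::real. exp (p * ln x)) at_top at_top"
    by (rule filterlim_compose[OF exp_at_top filterlim_tendsto_pos_mult_at_top[OF tendsto_const]])
       (simp_all add: ln_at_top assms)
  moreover have "eventually (\<lambda>x::real. exp (p * ln x) = x powr p) at_top"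
    using eventually_gt_at_top[of 0] by eventually_elim (simp add: powr_def)
  ultimately have "filterlim (\<lambda>x::real. x powr p) at_top at_top"
    using filterlim_cong by fastforce
  then show ?thesis by (rule filterlim_compose[OF _ filterlim_real_sequentially])
qed

text \<open>The conductances n^-\<beta> of the graph on Z*; summable exactly when \<beta> > 1.\<close>
locale power_walk =
  fixes \<beta> :: real
  assumes beta_gt_1: "1 < \<beta>"

sublocale power_walk \<subseteq> half_line_chain "\<lambda>n. real n powr (-\<beta>)"
  using beta_gt_1 by unfold_locales (simp_all add: summable_real_powr_iff)

context power_walk begin

text \<open>For \<beta> < 2 the weight of [t, 2t) is of order t^(1-\<beta>), so
  t * wsum (survival t) grows like t^(2-\<beta>).\<close>
lemma survival_heavy:
  assumes "\<beta> < 2"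
  shows "filterlim (\<lambda>t. real t * wsum (survival t)) at_top sequentially"
proof (rule filterlim_at_top_mono)
  define c where "c = 2 * 2 powr (-\<beta>)"
  show "filterlim (\<lambda>t. c * real t powr (2 - \<beta>)) at_top sequentially"
    using assms by (intro filterlim_tendsto_pos_mult_at_top[OF tendsto_const] powr_sequentially_at_top)
      (auto simp: c_def)
  show "eventually (\<lambda>t. c * real t powr (2 - \<beta>) \<le> real t * wsum (survival t)) sequentially"
  proof (rule eventually_mono[OF eventually_ge_at_top[of 1]])
    fix t :: nat assume "1 \<le> t"
    then have tpos: "0 < real t" by simp
    have "2 * (2 * real t) powr (-\<beta>) \<le> weight n" if "n \<in> {t..<2 * t}" for n
    proof -
      have "(2 * real t) powr (-\<beta>) \<le> real (Suc n) powr (-\<beta>)"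
        using that beta_gt_1 by (intro powr_mono2') auto
      then have "(2 * real t) powr (-\<beta>) \<le> real n powr (-\<beta>) + real (Suc n) powr (-\<beta>)"
        by (rule add_increasing[OF powr_ge_zero])
      then show ?thesis by (simp add: weight_def)
    qed
    then have "real t * (2 * (2 * real t) powr (-\<beta>)) \<le> (\<Sum>n\<in>{t..<2 * t}. weight n)"
      using sum_mono[of "{t..<2 * t}" "\<lambda>_. 2 * (2 * real t) powr (-\<beta>)"] by simp
    also have "\<dots> \<le> wsum (survival t)" by (rule survival_tail_lower)
    finally have "real t * (real t * (2 * (2 * real t) powr (-\<beta>))) \<le> real t * wsum (survival t)"
      using tpos by (intro mult_left_mono) auto
    moreover have "real t * (real t * (2 * (2 * real t) powr (-\<beta>))) = c * real t powr (2 - \<beta>)"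
      using tpos by (simp add: c_def powr_mult powr_diff powr_minus field_simps power2_eq_square)
    ultimately show "c * real t powr (2 - \<beta>) \<le> real t * wsum (survival t)" by simp
  qed
qed

end

lemma infsum_finite_support:
  fixes f :: "'a \<Rightarrow> real"
  assumes "finite F" and "\<And>y. y \<in> A \<Longrightarrow> y \<notin> F \<Longrightarrow> f y = 0"
  shows "infsum f A = sum f (A \<inter> F)"
proof -
  have "infsum f A = infsum f (A \<inter> F)" by (rule infsum_cong_neutral) (use assms in auto)
  then show ?thesis using assms(1) by simp
qed

lemma bij_uminus_int: "bij_betw uminus (UNIV :: int set) UNIV"
  by (rule bij_betwI[where g = uminus]) auto

lemma cond_uminus: "cond \<beta> (-x) (-y) = cond \<beta> x y"
  unfolding cond_def by (auto simp: sgn_minus abs_minus_commute)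

lemma cond_support: "cond \<beta> x y \<noteq> 0 \<Longrightarrow> y \<in> {x - 1, x, x + 1, -x}"
  unfolding cond_def by (auto split: if_splits simp: abs_if)

lemma pi_w_uminus: "pi_w \<beta> (-x) = pi_w \<beta> x"
proof -
  have "pi_w \<beta> (-x) = infsum (\<lambda>y. cond \<beta> (-x) (-y)) UNIV"
    unfolding pi_w_def by (rule infsum_reindex_bij_betw[OF bij_uminus_int, symmetric])
  then show ?thesis by (simp add: cond_uminus pi_w_def)
qed

lemma trans_p_uminus: "trans_p \<beta> (-x) (-y) = trans_p \<beta> x y"
  unfolding trans_p_def by (simp add: cond_uminus pi_w_uminus)

lemma trans_p_support: "trans_p \<beta> x z \<noteq> 0 \<Longrightarrow> \<bar>z\<bar> \<le> \<bar>x\<bar> + 1"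
  unfolding trans_p_def using cond_support[of \<beta> x z] by (auto split: if_splits)

lemma trans_pow_support: "trans_pow \<beta> t x y \<noteq> 0 \<Longrightarrow> \<bar>y\<bar> \<le> \<bar>x\<bar> + int t"
proof (induction t arbitrary: x)
  case (Suc t)
  show ?case
  proof (rule ccontr)
    assume far: "\<not> \<bar>y\<bar> \<le> \<bar>x\<bar> + int (Suc t)"
    have "trans_p \<beta> x z * trans_pow \<beta> t z y = 0" for z
      using trans_p_support[of \<beta> x z] Suc.IH[of z] far by force
    then have "trans_pow \<beta> (Suc t) x y = 0" by (simp add: infsum_0)
    then show False using Suc.prems by simp
  qed
qed (simp split: if_splits)

definition row_support :: "nat \<Rightarrow> int set" where
  "row_support n = {int n, int n + 1, int n + 2, -1}"

lemma sum_row_support: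
  "sum f (row_support n) = f (int n) + f (int n + 1) + f (int n + 2) + f (-1)"
proof -
  have "int n \<noteq> -1" "int n + 1 \<noteq> -1" "int n + 2 \<noteq> -1" by linarith+
  then show ?thesis by (simp add: row_support_def algebra_simps)
qed

lemma cond_left: "cond \<beta> (int n + 1) (int n) = real n powr (-\<beta>)"
  unfolding cond_def by (cases n) (auto simp: sgn_if add.commute)

lemma cond_hold:
  "cond \<beta> (int n + 1) (int n + 1) = (if n = 0 then 1/2 else real n powr (-\<beta>) + real (Suc n) powr (-\<beta>))"
  unfolding cond_def by (auto simp: add.commute)

lemma cond_right: "cond \<beta> (int n + 1) (int n + 2) = real (Suc n) powr (-\<beta>)"
  unfolding cond_def by (simp add: sgn_if add.commute)

lemma cond_cross: "cond \<beta> (int n + 1) (-1) = (if n = 0 then 1/2 else 0)"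
  unfolding cond_def by (auto simp: sgn_if)

lemma cond_outside: "y \<notin> row_support n \<Longrightarrow> cond \<beta> (int n + 1) y = 0"
proof (rule ccontr)
  assume y: "y \<notin> row_support n" and "cond \<beta> (int n + 1) y \<noteq> 0"
  then have "y = -(int n + 1)" using cond_support[of \<beta> "int n + 1" y] by (auto simp: row_support_def)
  with \<open>cond \<beta> (int n + 1) y \<noteq> 0\<close> y show False
    by (cases "n = 0") (auto simp: cond_def sgn_if row_support_def)
qed

lemma bij_int_pos: "bij_betw (\<lambda>n::nat. int n + 1) UNIV posC"
  by (rule bij_betwI[where g = "\<lambda>x. nat x - 1"]) (auto simp: posC_def)

lemma bij_int_neg: "bij_betw (\<lambda>n::nat. -(int n + 1)) UNIV {..<0}"
  by (rule bij_betwI[where g = "\<lambda>x. nat (-x) - 1"]) auto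

context power_walk begin

lemma pi_w_pos: "pi_w \<beta> (int n + 1) = weight n"
proof -
  have "pi_w \<beta> (int n + 1) = sum (cond \<beta> (int n + 1)) (UNIV \<inter> row_support n)"
    unfolding pi_w_def by (rule infsum_finite_support) (auto simp: row_support_def cond_outside)
  also have "\<dots> = weight n"
    by (simp add: sum_row_support cond_left cond_hold cond_right cond_cross weight_def)
  finally show ?thesis .
qed

lemma trans_p_pos: "trans_p \<beta> (int n + 1) y = cond \<beta> (int n + 1) y / weight n"
  unfolding trans_p_def by (simp add: pi_w_pos)

lemma one_step_pos:
  "infsum (\<lambda>z. trans_p \<beta> (int n + 1) z * V z) UNIV
     = p_left n * V (int n) + p_hold n * V (int n + 1) + p_right n * V (int n + 2)
       + (if n = 0 then V (-1) / 4 else 0)"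
proof -
  have "infsum (\<lambda>z. trans_p \<beta> (int n + 1) z * V z) UNIV
      = sum (\<lambda>z. trans_p \<beta> (int n + 1) z * V z) (row_support n)"
    using infsum_finite_support[of "row_support n" UNIV] by (simp add: row_support_def trans_p_pos cond_outside)
  also have "\<dots> = trans_p \<beta> (int n + 1) (int n) * V (int n)
      + trans_p \<beta> (int n + 1) (int n + 1) * V (int n + 1)
      + trans_p \<beta> (int n + 1) (int n + 2) * V (int n + 2) + trans_p \<beta> (int n + 1) (-1) * V (-1)"
    by (simp add: sum_row_support)
  also have "trans_p \<beta> (int n + 1) (int n) = p_left n"
    by (simp add: trans_p_pos cond_left p_left_def)
  also have "trans_p \<beta> (int n + 1) (int n + 1) = p_hold n"
    using weight_pos[of n] by (simp add: trans_p_pos cond_hold p_hold_def weight_def)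
  also have "trans_p \<beta> (int n + 1) (int n + 2) = p_right n"
    by (simp add: trans_p_pos cond_right p_right_def)
  also have "trans_p \<beta> (int n + 1) (-1) = (if n = 0 then 1/4 else 0)"
    by (simp add: trans_p_pos cond_cross)
  finally show ?thesis by simp
qed

lemma one_step_neg:
  "infsum (\<lambda>z. trans_p \<beta> (-(int n + 1)) z * V z) UNIV
     = p_left n * V (- int n) + p_hold n * V (-(int n + 1)) + p_right n * V (-(int n + 2))
       + (if n = 0 then V 1 / 4 else 0)"
proof -
  have "infsum (\<lambda>z. trans_p \<beta> (-(int n + 1)) z * V z) UNIV
      = infsum (\<lambda>z. trans_p \<beta> (-(int n + 1)) (-z) * V (-z)) UNIV"
    by (rule infsum_reindex_bij_betw[OF bij_uminus_int, symmetric])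
  also have "\<dots> = infsum (\<lambda>z. trans_p \<beta> (int n + 1) z * V (-z)) UNIV"
    using trans_p_uminus[of \<beta> "int n + 1"] by simp
  finally show ?thesis by (simp add: one_step_pos)
qed

lemma stay_in_eq_survival: "stay_in \<beta> posC t (int n + 1) = survival t n"
proof (induction t arbitrary: n)
  case (Suc t)
  define V where "V z = (if z \<in> posC then stay_in \<beta> posC t z else 0)" for z
  have V_pos: "V (int k + 1) = survival t k" for k
    using Suc.IH[of k] by (simp add: V_def posC_def)
  have V_left: "p_left n * V (int n) = p_left n * survival t (n - 1)"
  proof (cases n)
    case (Suc m)
    then have "int n = int m + 1" by simp
    then show ?thesis using V_pos[of m] Suc by (simp add: add.commute)
  qed (simp add: p_left_def)
  have "stay_in \<beta> posC (Suc t) (int n + 1) = infsum (\<lambda>z. trans_p \<beta> (int n + 1) z * V z) UNIV"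
    unfolding stay_in.simps by (rule infsum_cong_neutral) (auto simp: V_def)
  also have "\<dots> = killed (survival t) n"
    unfolding one_step_pos V_left
    using V_pos[of n] V_pos[of "Suc n"] by (simp add: V_def posC_def killed_def add.commute)
  finally show ?case by (simp add: survival_Suc)
qed simp

definition prob_pos_after :: "nat \<Rightarrow> int \<Rightarrow> real" where
  "prob_pos_after t x = infsum (trans_pow \<beta> t x) posC"

text \<open>Chapman--Kolmogorov for prob_pos_after; all sums are finite by locality.\<close>
lemma prob_pos_after_Suc:
  "prob_pos_after (Suc t) x = infsum (\<lambda>z. trans_p \<beta> x z * prob_pos_after t z) UNIV"
proof -
  define I where "I k = {-(\<bar>x\<bar> + int k) .. \<bar>x\<bar> + int k}" for k
  have fin: "finite (I k)" for k by (simp add: I_def)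
  have reach: "y \<in> I k'" if "trans_pow \<beta> k z y \<noteq> 0" "\<bar>z\<bar> + int k \<le> \<bar>x\<bar> + int k'" for k z y k'
    using trans_pow_support[OF that(1)] that(2) unfolding I_def by auto
  have step: "trans_p \<beta> x z = 0" if "z \<notin> I 1" for z
  proof (rule ccontr)
    assume "trans_p \<beta> x z \<noteq> 0"
    then have "\<bar>z\<bar> \<le> \<bar>x\<bar> + 1" by (rule trans_p_support)
    then show False using that by (auto simp: I_def abs_le_iff)
  qed
  have inner: "prob_pos_after t z = (\<Sum>y\<in>posC \<inter> I (Suc t). trans_pow \<beta> t z y)" if "z \<in> I 1" for z
    unfolding prob_pos_after_def
  proof (rule infsum_finite_support[OF fin])
    fix y assume "y \<notin> I (Suc t)"
    moreover have "\<bar>z\<bar> + int t \<le> \<bar>x\<bar> + int (Suc t)" using that by (auto simp: I_def abs_le_iff)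
    ultimately show "trans_pow \<beta> t z y = 0" using reach[of t z y "Suc t"] by blast
  qed
  have "prob_pos_after (Suc t) x = (\<Sum>y\<in>posC \<inter> I (Suc t). trans_pow \<beta> (Suc t) x y)"
    unfolding prob_pos_after_def by (rule infsum_finite_support[OF fin]) (use reach in blast)
  also have "\<dots> = (\<Sum>y\<in>posC \<inter> I (Suc t). \<Sum>z\<in>I 1. trans_p \<beta> x z * trans_pow \<beta> t z y)"
    using infsum_finite_support[OF fin[of 1], of UNIV] step by simp
  also have "\<dots> = (\<Sum>z\<in>I 1. trans_p \<beta> x z * prob_pos_after t z)"
    by (subst sum.swap) (simp add: sum_distrib_left inner)
  also have "\<dots> = infsum (\<lambda>z. trans_p \<beta> x z * prob_pos_after t z) UNIV"
    using infsum_finite_support[OF fin[of 1], of UNIV] step by simp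
  finally show ?thesis .
qed

end



context power_walk begin

text \<open>By the symmetry x \<mapsto> -x, P_x[Y_t > 0] - P_x[Y_t < 0] is odd in x
  and evolves by odd_step on the positive half-line.\<close>
lemma prob_pos_after_values:
  "prob_pos_after t (int n + 1) = (1 + sign_mean t n) / 2
   \<and> prob_pos_after t (-(int n + 1)) = (1 - sign_mean t n) / 2"
proof (induction t arbitrary: n)
  case 0
  have "prob_pos_after 0 x = sum (\<lambda>y. if x = y then 1 else 0) (posC \<inter> {x})" for x
    unfolding prob_pos_after_def trans_pow.simps by (rule infsum_finite_support) auto
  then show ?case by (auto simp: posC_def)
next
  case (Suc t)
  let ?g = "sign_mean t"
  have pos: "prob_pos_after t (int k + 1) = (1 + ?g k) / 2"
    and neg: "prob_pos_after t (-(int k + 1)) = (1 - ?g k) / 2" for k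
    using Suc.IH by simp_all
  have at_one: "prob_pos_after t 1 = (1 + ?g 0) / 2" "prob_pos_after t (-1) = (1 - ?g 0) / 2"
    using pos[of 0] neg[of 0] by simp_all
  have right: "prob_pos_after t (int n + 2) = (1 + ?g (Suc n)) / 2"
    "prob_pos_after t (-(int n + 2)) = (1 - ?g (Suc n)) / 2"
    using pos[of "Suc n"] neg[of "Suc n"] by (simp_all add: add.commute)
  have left_pos: "p_left n * prob_pos_after t (int n) = p_left n * ((1 + ?g (n - 1)) / 2)"
  proof (cases "n = 0")
    case False
    then have "int n = int (n - 1) + 1" by simp
    then show ?thesis by (simp only: pos)
  qed (simp add: p_left_def)
  have left_neg: "p_left n * prob_pos_after t (- int n) = p_left n * ((1 - ?g (n - 1)) / 2)"
  proof (cases "n = 0")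
    case False
    then have "- int n = -(int (n - 1) + 1)" by simp
    then show ?thesis by (simp only: neg)
  qed (simp add: p_left_def)
  have "prob_pos_after (Suc t) (int n + 1)
      = killed (\<lambda>k. (1 + ?g k) / 2) n + (if n = 0 then (1 - ?g 0) / 8 else 0)"
    unfolding prob_pos_after_Suc one_step_pos left_pos right pos at_one killed_def by simp
  moreover have "prob_pos_after (Suc t) (-(int n + 1))
      = killed (\<lambda>k. (1 - ?g k) / 2) n + (if n = 0 then (1 + ?g 0) / 8 else 0)"
    unfolding prob_pos_after_Suc one_step_neg left_neg right neg at_one killed_def by simp
  ultimately show ?case by (simp add: sign_mean_Suc odd_step_lift)
qed

lemma has_sum_half_line:
  assumes h: "bij_betw h UNIV A" and dom: "\<And>n. \<bar>F (h n)\<bar> \<le> B * weight n"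
  shows "(F has_sum (\<Sum>n. F (h n))) A"
proof -
  have abs: "summable (\<lambda>n. norm (F (h n)))"
    using dom by (intro summable_comparison_test[OF _ summable_mult[OF summable_weight]]) auto
  have "((\<lambda>n. F (h n)) has_sum (\<Sum>n. F (h n))) UNIV"
    using norm_summable_imp_has_sum[OF abs summable_sums[OF summable_norm_cancel[OF abs]]] .
  then show ?thesis using has_sum_reindex_bij_betw[OF h] by blast
qed

lemma pi_w_neg: "pi_w \<beta> (-(int n + 1)) = weight n"
  by (simp only: pi_w_uminus pi_w_pos)

lemma pi_w_normalizer: "infsum (pi_w \<beta>) (-{0}) = 2 * total"
proof -
  have dom: "\<bar>weight n\<bar> \<le> 1 * weight n" for n
    using weight_pos[of n] by simp
  have "(pi_w \<beta> has_sum (\<Sum>n. pi_w \<beta> (int n + 1))) posC"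
    by (rule has_sum_half_line[OF bij_int_pos, where B = 1]) (simp only: pi_w_pos dom)
  then have pos: "(pi_w \<beta> has_sum total) posC"
    by (simp only: pi_w_pos total_def wsum_def mult_1_right)
  have "(pi_w \<beta> has_sum (\<Sum>n. pi_w \<beta> (-(int n + 1)))) {..<0}"
    by (rule has_sum_half_line[OF bij_int_neg, where B = 1]) (simp only: pi_w_neg dom)
  then have neg: "(pi_w \<beta> has_sum total) {..<0}"
    by (simp only: pi_w_neg total_def wsum_def mult_1_right)
  have "-{0::int} = posC \<union> {..<0}" by (auto simp: posC_def)
  moreover have "(pi_w \<beta> has_sum (total + total)) (posC \<union> {..<0})"
    by (rule has_sum_Un_disjoint[OF pos neg]) (auto simp: posC_def)
  ultimately show ?thesis by (simp add: infsumI)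
qed

lemma pi_norm_pos: "pi_norm \<beta> (int n + 1) = weight n / (2 * total)"
  unfolding pi_norm_def by (simp add: pi_w_normalizer pi_w_pos)

lemma infsum_posC_weighted:
  assumes F: "\<And>n. F (int n + 1) = weight n / (2 * total) * f n" and f: "Bseq f"
  shows "infsum F posC = wsum f / (2 * total)"
proof -
  obtain K where K: "\<And>n. \<bar>f n\<bar> \<le> K" using f by (auto simp: Bseq_def)
  have "(F has_sum (\<Sum>n. F (int n + 1))) posC"
  proof (rule has_sum_half_line[OF bij_int_pos, where B = "K / (2 * total)"])
    fix n
    have "\<bar>F (int n + 1)\<bar> = weight n / (2 * total) * \<bar>f n\<bar>"
      unfolding F using weight_pos[of n] total_pos by (simp add: abs_mult)
    also have "\<dots> \<le> weight n / (2 * total) * K"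
      using K[of n] weight_pos[of n] total_pos by (intro mult_left_mono) auto
    finally show "\<bar>F (int n + 1)\<bar> \<le> K / (2 * total) * weight n" by (simp add: ac_simps)
  qed
  then have "infsum F posC = (\<Sum>n. weight n * f n / (2 * total))"
    by (simp add: infsumI F)
  also have "\<dots> = wsum f / (2 * total)"
    unfolding wsum_def by (rule suminf_divide[OF summable_weighted[OF f]])
  finally show ?thesis .
qed

lemma prob_start_half: "prob_start \<beta> posC = 1/2"
proof -
  have "prob_start \<beta> posC = wsum (\<lambda>_. 1) / (2 * total)"
    unfolding prob_start_def by (rule infsum_posC_weighted) (simp_all add: pi_norm_pos)
  then show ?thesis using total_pos by (simp add: total_def)
qed

lemma prob_stay_eq: "prob_stay \<beta> posC t = wsum (survival t) / (2 * total)"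
  unfolding prob_stay_def
  by (rule infsum_posC_weighted) (simp_all add: pi_norm_pos stay_in_eq_survival Bseq_survival)

lemma prob_both_eq: "prob_both \<beta> posC t = (total + wsum (sign_mean t)) / (4 * total)"
proof -
  have bounded: "Bseq (\<lambda>n. 1 + sign_mean t n)"
  proof (rule BseqI'[where K = 2])
    fix n
    show "norm (1 + sign_mean t n) \<le> 2"
      using sign_mean_bounds[of t n] survival_bounds[of t n] by simp
  qed
  have "prob_both \<beta> posC t = wsum (\<lambda>n. (1/2) * (1 + sign_mean t n)) / (2 * total)"
    unfolding prob_both_def
  proof (rule infsum_posC_weighted)
    show "pi_norm \<beta> (int n + 1) * infsum (trans_pow \<beta> t (int n + 1)) posC
        = weight n / (2 * total) * ((1/2) * (1 + sign_mean t n))" for n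
    proof -
      have "infsum (trans_pow \<beta> t (int n + 1)) posC = (1 + sign_mean t n) / 2"
        using prob_pos_after_values[of t n] unfolding prob_pos_after_def by blast
      then show ?thesis by (simp only: pi_norm_pos)
    qed
    show "Bseq (\<lambda>n. (1/2) * (1 + sign_mean t n))" by (rule Bseq_mult[OF Bfun_const bounded])
  qed
  also have "wsum (\<lambda>n. (1/2) * (1 + sign_mean t n)) = (1/2) * wsum (\<lambda>n. 1 + sign_mean t n)"
    by (rule wsum_scale[OF bounded])
  also have "wsum (\<lambda>n. 1 + sign_mean t n) = total + wsum (sign_mean t)"
    unfolding total_def by (rule wsum_add[OF Bfun_const Bseq_sign_mean])
  finally show ?thesis by simp
qed

end

theorem mainTheorem7:
  fixes \<beta> :: real
  assumes "1 < \<beta>" and "\<beta> < 2"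
  shows "(\<forall>t::nat. prob_both \<beta> posC t - (prob_start \<beta> posC)\<^sup>2
                  \<le> 1/2 * prob_stay \<beta> posC t)
       \<and> (\<forall>\<epsilon>>0. \<exists>t0::nat. \<forall>t\<ge>t0.
            prob_both \<beta> posC t - (prob_start \<beta> posC)\<^sup>2
              \<ge> (1/2 - \<epsilon>) * prob_stay \<beta> posC t)"
proof -
  interpret power_walk \<beta> using assms(1) by unfold_locales
  have cov: "prob_both \<beta> posC t - (prob_start \<beta> posC)\<^sup>2 = wsum (sign_mean t) / (4 * total)" for t
    using total_pos by (simp add: prob_both_eq prob_start_half field_simps power2_eq_square)
  have stay: "c * prob_stay \<beta> posC t = 2 * c * wsum (survival t) / (4 * total)" for c t
    by (simp add: prob_stay_eq)
  show ?thesis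
  proof (intro conjI allI impI)
    show "prob_both \<beta> posC t - (prob_start \<beta> posC)\<^sup>2 \<le> 1/2 * prob_stay \<beta> posC t" for t
      unfolding cov stay using sign_mean_le_survival total_pos by (simp add: divide_right_mono)
  next
    fix \<epsilon> :: real assume "0 < \<epsilon>"
    have "eventually (\<lambda>t. wsum (survival t) - wsum (sign_mean t) \<le> 2 * \<epsilon> * wsum (survival t)) sequentially"
      using defect_negligible[OF survival_heavy[OF assms(2)]] \<open>0 < \<epsilon>\<close> by simp
    then obtain t0 where t0: "\<And>t. t0 \<le> t \<Longrightarrow> 2 * (1/2 - \<epsilon>) * wsum (survival t) \<le> wsum (sign_mean t)"
      unfolding eventually_sequentially by (auto simp: algebra_simps)
    show "\<exists>t0. \<forall>t\<ge>t0. prob_both \<beta> posC t - (prob_start \<beta> posC)\<^sup>2 \<ge> (1/2 - \<epsilon>) * prob_stay \<beta> posC t"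
      unfolding cov stay using t0 total_pos by (intro exI[of _ t0] allI impI divide_right_mono) auto
  qed
qed

end
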